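(* Let $K=3$ and let $l>m\ge s$ be nonnegative integers. Then \[ h(l,\,m+1,\,s)\ \ge\ h(l+1,\,m,\,s)\qquad\text{and}\qquad h(l,\,m,\,s+1)\ \ge\ h(l+1,\,m,\,s). \]
   Context: For a vector $\vec n=(n_1,n_2,n_3)$ of nonnegative integers, the following random process is run: stocks start at $\vec n^{(0)}=\vec n$; at each step $t=1,2,\dots$, as long as at least two coordinates of $\vec n^{(t-1)}$ are nonzero, an index $i$ is chosen uniformly at random (independently of the past) among the indices with $n_i^{(t-1)}>0$, and $\vec n^{(t)}=\vec n^{(t-1)}-\vec e_i$ ($\vec e_i$ the $i$-th standard unit vector). The process stops at the first time $T$ at which at most one coordinate is nonzero, and $h(\vec n)=\mathbb{E}[T]$. Equivalently, with $\operatorname{support}(\vec n)=\{i:n_i\ne 0\}$: $h(\vec n)=0$ if $|\operatorname{support}(\vec n)|\le1$, and otherwise $h(\vec n)=1+\frac{1}{|\operatorname{support}(\vec n)|}\sum_{i\in\operatorname{support}(\vec n)}h(\vec n-\vec e_i)$. Note $h$ is symmetric in its arguments. *)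

theory Defs
  imports Complex_Main
begin

text \<open>Expected stopping time h(n1,n2,n3) of the three-stock random depletion process.
  h n = 0 if at most one coordinate is nonzero; otherwise
  h n = 1 + (1 / |supp n|) * sum over i in supp n of h (n - e_i).\<close>

function h :: "nat \<Rightarrow> nat \<Rightarrow> nat \<Rightarrow> real" where
  "h n1 n2 n3 =
    (let S = {i::nat. (i = 1 \<and> n1 \<noteq> 0) \<or> (i = 2 \<and> n2 \<noteq> 0) \<or> (i = 3 \<and> n3 \<noteq> 0)}
     in if card S \<le> 1 then 0
        else 1 + (1 / real (card S)) *
          ((if n1 \<noteq> 0 then h (n1 - 1) n2 n3 else 0)
         + (if n2 \<noteq> 0 then h n1 (n2 - 1) n3 else 0)
         + (if n3 \<noteq> 0 then h n1 n2 (n3 - 1) else 0)))"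
  by pat_completeness auto
termination
  by (relation "measure (\<lambda>(a, b, c). a + b + c)") auto

end

theory Submission
  imports Defs
begin

text \<open>
  Moving one unit from the first pile to the second changes h by shift_gain a b c =
  h(a-1,b+1,c) - h(a,b,c); by symmetry of h both inequalities say that this is nonnegative when
  b < a and c \<le> a. When all piles involved are nonempty, the gain obeys the averaging recurrence
  of h without its constant term, so nonnegativity propagates by induction on a + b + c. On the
  boundary a = b + 1 symmetry makes the gain vanish, and the diagonal c = a is covered by proving
  simultaneously that the gains towards the middle pile from both sides, at (x,b,z) and (z,b,x),
  have nonnegative sum for x, z > b. An empty middle pile changes the support size and the
  recurrence picks up a two-pile gain; there one shows instead that shift_gain a 0 c is antitone
  in c, which reduces it to the diagonal. That in turn rests on the two-pile gain being antitone,
  whose base case is h(n,1,0) = 2 - 2^(1-n).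
\<close>

declare h.simps [simp del]

lemma card_support:
  "card {i::nat. (i = 1 \<and> P) \<or> (i = 2 \<and> Q) \<or> (i = 3 \<and> R)} = of_bool P + of_bool Q + of_bool R"
proof -
  have "{i::nat. (i = 1 \<and> P) \<or> (i = 2 \<and> Q) \<or> (i = 3 \<and> R)} =
      (if P then {1} else {}) \<union> (if Q then {2} else {}) \<union> (if R then {3} else {})"
    by auto
  then show ?thesis
    by (simp add: card_Un_disjoint)
qed

lemma h_unfold:
  "h a b c =
    (let k = of_bool (a \<noteq> 0) + of_bool (b \<noteq> 0) + of_bool (c \<noteq> 0)
     in if k \<le> 1 then 0
        else 1 + 1 / real k *
          ((if a \<noteq> 0 then h (a - 1) b c else 0)
         + (if b \<noteq> 0 then h a (b - 1) c else 0)
         + (if c \<noteq> 0 then h a b (c - 1) else 0)))"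
  by (subst h.simps) (simp only: card_support Let_def)

lemma h_single_pile [simp]: "h a 0 0 = 0" "h 0 b 0 = 0"
  by (subst h_unfold; simp)+

lemma h_two_piles: "2 * h (Suc a) (Suc b) 0 = 2 + h a (Suc b) 0 + h (Suc a) b 0"
  by (subst h_unfold) simp

lemma h_three_piles:
  "3 * h (Suc a) (Suc b) (Suc c) = 3 + h a (Suc b) (Suc c) + h (Suc a) b (Suc c) + h (Suc a) (Suc b) c"
  by (subst h_unfold) simp

lemma h_nonneg: "0 \<le> h a b c"
proof (induction "a + b + c" arbitrary: a b c rule: less_induct)
  case less
  show ?case
    by (subst h_unfold) (auto simp: Let_def less)
qed

lemma h_sym12: "h a b c = h b a c"
proof (induction "a + b + c" arbitrary: a b c rule: less_induct)
  case less
  show ?case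
    by (subst (1 2) h_unfold) (auto simp: Let_def less algebra_simps)
qed

lemma h_sym23: "h a b c = h a c b"
proof (induction "a + b + c" arbitrary: a b c rule: less_induct)
  case less
  show ?case
    by (subst (1 2) h_unfold) (auto simp: Let_def less algebra_simps)
qed

lemma h_unit_pile: "h n 1 0 = 2 - 2 * (1 / 2) ^ n"
proof (induction n)
  case (Suc n)
  then show ?case
    using h_two_piles[of n 0] by simp
qed simp

lemma h_unit_pile_mono: "h n 1 0 \<le> h (Suc n) 1 0"
  using h_unit_pile[of n] h_unit_pile[of "Suc n"] by simp

text \<open>For a = 0 the truncated a - 1 makes this h 0 (b+1) c - h 0 b c; it is only used for a > 0.\<close>

definition shift_gain :: "nat \<Rightarrow> nat \<Rightarrow> nat \<Rightarrow> real" where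
  "shift_gain a b c = h (a - 1) (b + 1) c - h a b c"

lemma shift_gain_antisym: "shift_gain (Suc a) b c = - shift_gain (Suc b) a c"
  unfolding shift_gain_def using h_sym12[of a "Suc b" c] h_sym12[of "Suc a" b c] by simp

lemma shift_gain_Suc_self: "shift_gain (Suc b) b c = 0"
  using shift_gain_antisym[of b b c] by simp

lemma shift_gain_rec:
  "3 * shift_gain (Suc (Suc a)) (Suc b) (Suc c) =
     shift_gain (Suc a) (Suc b) (Suc c) + shift_gain (Suc (Suc a)) b (Suc c)
   + shift_gain (Suc (Suc a)) (Suc b) c"
  unfolding shift_gain_def using h_three_piles[of a "Suc b" c] h_three_piles[of "Suc a" b c] by simp

lemma shift_gain_rec_two_piles:
  "2 * shift_gain (Suc (Suc a)) (Suc b) 0 = shift_gain (Suc a) (Suc b) 0 + shift_gain (Suc (Suc a)) b 0"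
  unfolding shift_gain_def using h_two_piles[of a "Suc b"] h_two_piles[of "Suc a" b] by simp

text \<open>The states (a+1, 1, c+1) and (a+2, 0, c+1) average over three resp. two neighbours, which
  leaves a two-pile gain as an extra term.\<close>

lemma shift_gain_rec_empty_middle:
  "6 * shift_gain (Suc (Suc a)) 0 (Suc c) =
     2 * shift_gain (Suc a) 0 (Suc c) + 2 * shift_gain (Suc (Suc a)) 0 c + shift_gain (Suc (Suc a)) c 0"
  unfolding shift_gain_def
  using h_three_piles[of a 0 c] h_two_piles[of "Suc a" c]
    h_sym23[of "Suc (Suc a)" 0 "Suc c"] h_sym23[of "Suc a" 0 "Suc c"] h_sym23[of "Suc (Suc a)" 0 c]
  by simp

lemma shift_gain_two_piles_antimono: "shift_gain (Suc a) (Suc b) 0 \<le> shift_gain (Suc a) b 0"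
proof (induction "a + b" arbitrary: a b rule: less_induct)
  case less
  show ?case
  proof (cases a)
    case 0
    then show ?thesis
      using h_unit_pile_mono[of b] h_sym12[of 1 b 0] h_sym12[of 1 "Suc b" 0]
      by (simp add: shift_gain_def)
  next
    case (Suc a')
    show ?thesis
    proof (cases b)
      case 0
      have "shift_gain a 1 0 \<le> shift_gain a 0 0"
        using less[of a' 0] Suc 0 by simp
      then show ?thesis
        using shift_gain_rec_two_piles[of a' 0] h_unit_pile_mono[of a'] Suc 0
        by (simp add: shift_gain_def)
    next
      case (Suc b')
      have "shift_gain a (Suc b) 0 \<le> shift_gain a b 0"
        using less[of a' b] \<open>a = Suc a'\<close> by simp
      moreover have "shift_gain (Suc a) b 0 \<le> shift_gain (Suc a) b' 0"
        using less[of a b'] Suc by simp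
      ultimately show ?thesis
        using shift_gain_rec_two_piles[of a' b] shift_gain_rec_two_piles[of a' b'] \<open>a = Suc a'\<close> Suc
        by simp
    qed
  qed
qed

lemma shift_gain_empty_middle_antimono: "shift_gain (Suc a) 0 (Suc c) \<le> shift_gain (Suc a) 0 c"
proof (induction "a + c" arbitrary: a c rule: less_induct)
  case less
  show ?case
  proof (cases a)
    case 0
    then show ?thesis
      by (simp add: shift_gain_Suc_self)
  next
    case (Suc a')
    show ?thesis
    proof (cases c)
      case 0
      have "shift_gain a 0 1 \<le> shift_gain a 0 0"
        using less[of a' 0] Suc 0 by simp
      then show ?thesis
        using shift_gain_rec_empty_middle[of a' 0] h_unit_pile_mono[of a'] h_nonneg[of a 1 0] Suc 0
        by (simp add: shift_gain_def)
    next
      case (Suc c')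
      have "shift_gain a 0 (Suc c) \<le> shift_gain a 0 c"
        using less[of a' c] \<open>a = Suc a'\<close> by simp
      moreover have "shift_gain (Suc a) 0 c \<le> shift_gain (Suc a) 0 c'"
        using less[of a c'] Suc by simp
      moreover have "shift_gain (Suc a) c 0 \<le> shift_gain (Suc a) c' 0"
        using shift_gain_two_piles_antimono[of a c'] Suc by simp
      ultimately show ?thesis
        using shift_gain_rec_empty_middle[of a' c] shift_gain_rec_empty_middle[of a' c'] \<open>a = Suc a'\<close> Suc
        by simp
    qed
  qed
qed

lemma shift_gain_empty_middle_unit_nonneg: "0 \<le> shift_gain (Suc n) 0 1"
proof (induction n)
  case (Suc n)
  then show ?case
    using shift_gain_rec_empty_middle[of n 0] h_nonneg[of "Suc n" 1 0]
    by (simp add: shift_gain_def)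
qed (simp add: shift_gain_Suc_self)

lemma shift_gain_empty_middle_pair_nonneg:
  "0 \<le> shift_gain (Suc x) 0 (Suc z) + shift_gain (Suc z) 0 (Suc x)"
proof (induction "x + z" arbitrary: x z rule: less_induct)
  case less
  show ?case
  proof (cases x)
    case 0
    then show ?thesis
      using shift_gain_empty_middle_unit_nonneg[of z] by (simp add: shift_gain_Suc_self)
  next
    case (Suc x')
    show ?thesis
    proof (cases z)
      case 0
      then show ?thesis
        using shift_gain_empty_middle_unit_nonneg[of x] by (simp add: shift_gain_Suc_self)
    next
      case (Suc z')
      have "0 \<le> shift_gain x 0 (Suc z) + shift_gain (Suc z) 0 x"
        using less[of x' z] \<open>x = Suc x'\<close> by simp
      moreover have "0 \<le> shift_gain (Suc x) 0 z + shift_gain z 0 (Suc x)"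
        using less[of x z'] Suc by simp
      moreover have "shift_gain (Suc x) z 0 + shift_gain (Suc z) x 0 = 0"
        using shift_gain_antisym[of x z 0] by simp
      ultimately show ?thesis
        using shift_gain_rec_empty_middle[of x' z] shift_gain_rec_empty_middle[of z' x] \<open>x = Suc x'\<close> Suc
        by simp
    qed
  qed
qed

lemma shift_gain_empty_middle_nonneg:
  assumes "c \<le> Suc a"
  shows "0 \<le> shift_gain (Suc a) 0 c"
proof -
  have "shift_gain (Suc a) 0 (Suc a) \<le> shift_gain (Suc a) 0 c"
    using lift_Suc_antimono_le[of "shift_gain (Suc a) 0", OF shift_gain_empty_middle_antimono] assms
    by simp
  moreover have "0 \<le> shift_gain (Suc a) 0 (Suc a)"
    using shift_gain_empty_middle_pair_nonneg[of a a] by simp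
  ultimately show ?thesis
    by simp
qed

lemma shift_gain_nonneg_off_diagonal:
  assumes IH: "\<And>a' b' c'. a' + b' + c' < a + b + c \<Longrightarrow> Suc b' \<le> a' \<Longrightarrow> c' \<le> a'
      \<Longrightarrow> 0 \<le> shift_gain a' b' c'"
    and "Suc b \<le> a" "c < a"
  shows "0 \<le> shift_gain a b c"
proof -
  consider "b = 0" | "a = Suc b" | a' b' where "a = Suc (Suc a')" "b = Suc b'" "Suc b < a"
    using \<open>Suc b \<le> a\<close> by (metis Suc_lessE le_neq_implies_less not0_implies_Suc)
  then show ?thesis
  proof cases
    case 1
    then show ?thesis
      using shift_gain_empty_middle_nonneg[of c "a - 1"] assms(2,3) by simp
  next
    case 2
    then show ?thesis
      by (simp add: shift_gain_Suc_self)
  next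
    case 3
    show ?thesis
    proof (cases c)
      case 0
      then show ?thesis
        using shift_gain_rec_two_piles[of a' b'] IH[of "Suc a'" b 0] IH[of a b' 0] assms(2,3) 3
        by simp
    next
      case (Suc c')
      then show ?thesis
        using shift_gain_rec[of a' b' c'] IH[of "Suc a'" b c] IH[of a b' c] IH[of a b c'] assms(2,3) 3
        by simp
    qed
  qed
qed

lemma shift_gain_pair_nonneg_step:
  assumes IH_gain: "\<And>a' b' c'. a' + b' + c' < x + b + z \<Longrightarrow> Suc b' \<le> a' \<Longrightarrow> c' \<le> a'
      \<Longrightarrow> 0 \<le> shift_gain a' b' c'"
    and IH_pair: "\<And>x' b' z'. x' + b' + z' < x + b + z \<Longrightarrow> Suc b' \<le> x' \<Longrightarrow> Suc b' \<le> z'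
      \<Longrightarrow> 0 \<le> shift_gain x' b' z' + shift_gain z' b' x'"
    and "Suc b \<le> x" "Suc b \<le> z"
  shows "0 \<le> shift_gain x b z + shift_gain z b x"
proof -
  have edge: "0 \<le> shift_gain y b (Suc b)" if "y + b + Suc b = x + b + z" "Suc b \<le> y" for y
  proof (cases "y = Suc b")
    case False
    then show ?thesis
      using shift_gain_nonneg_off_diagonal[of y b "Suc b"] IH_gain that by simp
  qed (simp add: shift_gain_Suc_self)
  consider "b = 0" | "x = Suc b" | "z = Suc b" | x' b' z' where
      "x = Suc (Suc x')" "b = Suc b'" "z = Suc (Suc z')" "Suc b < x" "Suc b < z"
    using assms(3,4) by (metis Suc_lessE le_neq_implies_less not0_implies_Suc)
  then show ?thesis
  proof cases
    case 1
    then show ?thesis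
      using shift_gain_empty_middle_pair_nonneg[of "x - 1" "z - 1"] assms(3,4) by simp
  next
    case 2
    then show ?thesis
      using edge[of z] assms(4) by (simp add: shift_gain_Suc_self)
  next
    case 3
    then show ?thesis
      using edge[of x] assms(3) by (simp add: shift_gain_Suc_self)
  next
    case 4
    then show ?thesis
      using shift_gain_rec[of x' b' "Suc z'"] shift_gain_rec[of z' b' "Suc x'"]
        IH_pair[of "Suc x'" b z] IH_pair[of x b' z] IH_pair[of x b "Suc z'"]
      by simp
  qed
qed

lemma shift_gain_nonneg_and_pair_nonneg:
  "(Suc b \<le> a \<longrightarrow> c \<le> a \<longrightarrow> 0 \<le> shift_gain a b c)
   \<and> (Suc b \<le> a \<longrightarrow> Suc b \<le> c \<longrightarrow> 0 \<le> shift_gain a b c + shift_gain c b a)"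
proof (induction "a + b + c" arbitrary: a b c rule: less_induct)
  case less
  \<comment> \<open>Within one size the pair bound needs the gain bound only off the diagonal, and on the
    diagonal the gain is half a pair sum.\<close>
  have pair: "0 \<le> shift_gain a b c + shift_gain c b a" if "Suc b \<le> a" "Suc b \<le> c"
    using shift_gain_pair_nonneg_step[of a b c] less that by blast
  have "0 \<le> shift_gain a b c" if "Suc b \<le> a" "c \<le> a"
  proof (cases "c < a")
    case True
    then show ?thesis
      using shift_gain_nonneg_off_diagonal[of a b c] less that by blast
  next
    case False
    then show ?thesis
      using pair that by simp
  qed
  with pair show ?case
    by blast
qed

lemma shift_gain_nonneg: "Suc b \<le> a \<Longrightarrow> c \<le> a \<Longrightarrow> 0 \<le> shift_gain a b c"
  using shift_gain_nonneg_and_pair_nonneg by blast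

theorem lemma3:
  fixes l m s :: nat
  assumes "l > m" and "m \<ge> s"
  shows "h l (m + 1) s \<ge> h (l + 1) m s \<and> h l m (s + 1) \<ge> h (l + 1) m s"
proof
  show "h (l + 1) m s \<le> h l (m + 1) s"
    using shift_gain_nonneg[of m "l + 1" s] assms by (simp add: shift_gain_def)
  have "h (l + 1) s m \<le> h l (s + 1) m"
    using shift_gain_nonneg[of s "l + 1" m] assms by (simp add: shift_gain_def)
  then show "h (l + 1) m s \<le> h l m (s + 1)"
    using h_sym23 by metis
qed

end
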